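(* Let $\lambda_1>\lambda_0>0$, $a,b>0$ with $\lambda_1-\lambda_0>\frac1a+\frac1b$, and let $0<\alpha^*<b/a<\beta^*$ be the optimal stopping boundaries described in the context. Let $f_0$ be the (unique continuous) solution of $$(\lambda_0-\lambda_1)\varphi f_0'(\varphi)+\lambda_0[f_0(\lambda_1\varphi/\lambda_0)-f_0(\varphi)]=0\ \text{ for }\varphi\in(\alpha^*/\beta^*,1),\qquad f_0(1)=1,\quad f_0(\varphi)=0\ \text{for }\varphi>1,$$ and let $f_1$ be the (unique continuous) solution of $$(\lambda_0-\lambda_1)\varphi f_1'(\varphi)+\lambda_0[f_1(\lambda_1\varphi/\lambda_0)-f_1(\varphi)]+(\varphi-1)=0\ \text{ for }\varphi\in(\alpha^*/\beta^*,1),\qquad f_1(1)=0,\quad f_1(\varphi)=-b\ \text{for }\varphi>1.$$ Then $f_0$ and $f_1$ are strictly decreasing on $[\alpha^*/\beta^*,1]$.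
   Context: Setting: $X$ is a Poisson process with $X_0=0$ which under $\mathsf P_0$ ($\mathsf E_0$ its expectation) has intensity $\lambda_0$; $L_t=\exp\{X_t\log(\lambda_1/\lambda_0)-(\lambda_1-\lambda_0)t\}$; $\mathbb S$ is the set of stopping times of the natural filtration of $X$. For $\psi>0$ and $\tau\in\mathbb S$, $\bar J(\psi;\tau)=\frac{1}{1+\psi}\mathsf E_0\big[\int_0^\tau(1+\psi L_t)\,dt+(a\psi L_\tau)\wedge b\big]$. When $\lambda_1-\lambda_0>1/a+1/b$ there exist unique constants $0<\alpha^*<b/a<\beta^*$ (independent of $\psi$) such that for every $\psi>0$ the stopping time $\inf\{t\ge0:\psi L_t\notin(\alpha^*,\beta^* )\}$ minimizes $\bar J(\psi;\cdot)$ over $\mathbb S$. *)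

theory Defs
  imports "HOL-Probability.Probability"
begin

definition poisson_process :: "'a measure \<Rightarrow> (real \<Rightarrow> 'a \<Rightarrow> nat) \<Rightarrow> real \<Rightarrow> bool" where
  "poisson_process M X lam \<longleftrightarrow>
     prob_space M \<and>
     (\<forall>t. X t \<in> M \<rightarrow>\<^sub>M count_space UNIV) \<and>
     (\<forall>\<omega>\<in>space M. X 0 \<omega> = 0 \<and> mono_on {0..} (\<lambda>t. X t \<omega>) \<and>
        (\<forall>t\<ge>0. continuous (at_right t) (\<lambda>s. real (X s \<omega>)))) \<and>
     (\<forall>s t k. 0 \<le> s \<longrightarrow> s \<le> t \<longrightarrow>
        measure M {\<omega>\<in>space M. X t \<omega> - X s \<omega> = k}
          = exp (- lam * (t - s)) * (lam * (t - s)) ^ k / fact k) \<and>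
     (\<forall>(ts :: nat \<Rightarrow> real) n. (\<forall>i. 0 \<le> ts i \<and> ts i \<le> ts (Suc i)) \<longrightarrow>
        prob_space.indep_vars M (\<lambda>_. count_space UNIV)
          (\<lambda>i \<omega>. X (ts (Suc i)) \<omega> - X (ts i) \<omega>) {..<n})"

definition nat_filtration :: "'a measure \<Rightarrow> (real \<Rightarrow> 'a \<Rightarrow> nat) \<Rightarrow> real \<Rightarrow> 'a measure" where
  "nat_filtration M X t =
     sigma (space M) {X s -` A \<inter> space M | s A. 0 \<le> s \<and> s \<le> t}"

definition nat_stopping_time :: "'a measure \<Rightarrow> (real \<Rightarrow> 'a \<Rightarrow> nat) \<Rightarrow> ('a \<Rightarrow> ennreal) \<Rightarrow> bool" where
  "nat_stopping_time M X \<tau> \<longleftrightarrow>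
     (\<forall>t\<ge>0. {\<omega>\<in>space M. \<tau> \<omega> \<le> ennreal t} \<in> sets (nat_filtration M X t))"

definition LR :: "(real \<Rightarrow> 'a \<Rightarrow> nat) \<Rightarrow> real \<Rightarrow> real \<Rightarrow> real \<Rightarrow> 'a \<Rightarrow> real" where
  "LR X lam0 lam1 t \<omega> = exp (real (X t \<omega>) * ln (lam1 / lam0) - (lam1 - lam0) * t)"

text \<open>On {tau = \<infinity>} the time integral is
  infinite, so the (bounded) terminal term there is irrelevant.\<close>
definition Jbar :: "'a measure \<Rightarrow> (real \<Rightarrow> 'a \<Rightarrow> nat) \<Rightarrow> real \<Rightarrow> real \<Rightarrow> real \<Rightarrow> real \<Rightarrow> real
                    \<Rightarrow> ('a \<Rightarrow> ennreal) \<Rightarrow> ennreal" where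
  "Jbar M X lam0 lam1 a b \<psi> \<tau> =
     ennreal (1 / (1 + \<psi>)) *
     (\<integral>\<^sup>+ \<omega>. ((\<integral>\<^sup>+ t. indicator {t. 0 \<le> t \<and> ennreal t < \<tau> \<omega>} t
                        * ennreal (1 + \<psi> * LR X lam0 lam1 t \<omega>) \<partial>lborel)
              + ennreal (min (a * \<psi> * LR X lam0 lam1 (enn2real (\<tau> \<omega>)) \<omega>) b)) \<partial>M)"

text \<open>The exit time inf{t >= 0 : psi L_t \<notin> (alpha, beta)} (inf of the empty set is \<infinity>).\<close>
definition exit_time :: "(real \<Rightarrow> 'a \<Rightarrow> nat) \<Rightarrow> real \<Rightarrow> real \<Rightarrow> real \<Rightarrow> real \<Rightarrow> real \<Rightarrow> 'a \<Rightarrow> ennreal" where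
  "exit_time X lam0 lam1 \<psi> \<alpha> \<beta> \<omega> =
     Inf {ennreal t | t. 0 \<le> t \<and> \<psi> * LR X lam0 lam1 t \<omega> \<notin> {\<alpha><..<\<beta>}}"

end

theory Submission
  imports Defs
begin

text \<open>Suppose f were not strictly decreasing, and take the rightmost point z where f attains its
  maximum over some [x, 1] with x < z. Then f is strictly below f z to the right of z, so the shift
  \<phi> \<mapsto> lam1 \<phi> / lam0 > \<phi> lands at a smaller value: either inside (z, 1] or beyond 1, where
  f is the boundary value, which lies below f 1 \<le> f z. The delay equation then forces f' < 0
  just left of z, so f exceeds f z there, contradicting maximality. Of the optimal stopping data
  only 0 < \<alpha> / \<beta> < 1 enters.\<close>

lemma strict_antimono_on_if_rises_left_of_strict_right_max:
  fixes f :: "real \<Rightarrow> real"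
  assumes cont: "continuous_on {lo..hi} f"
    and rise: "\<And>z. lo < z \<Longrightarrow> z \<le> hi \<Longrightarrow> (\<And>\<psi>. z < \<psi> \<Longrightarrow> \<psi> \<le> hi \<Longrightarrow> f \<psi> < f z) \<Longrightarrow>
                 \<forall>\<^sub>F t in at_left z. f z < f t"
  shows "strict_antimono_on {lo..hi} f"
proof (rule monotone_onI)
  fix x y assume x: "x \<in> {lo..hi}" and y: "y \<in> {lo..hi}" and "x < y"
  show "f y < f x"
  proof (rule ccontr)
    assume "\<not> f y < f x"
    have cont_x: "continuous_on {x..hi} f" using cont x by (auto intro: continuous_on_subset)
    obtain m where m: "m \<in> {x..hi}" and max_m: "\<forall>t\<in>{x..hi}. f t \<le> f m"
      using continuous_attains_sup[OF compact_Icc _ cont_x] x by auto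
    define K where "K = {t \<in> {x..hi}. f t = f m}"
    have "compact K"
      unfolding K_def compact_eq_bounded_closed
      using continuous_closed_preimage_constant[OF cont_x closed_atLeastAtMost]
      by (auto intro: bounded_subset[OF bounded_closed_interval])
    moreover have "K \<noteq> {}" using m K_def by auto
    ultimately obtain z where "z \<in> K" and rightmost: "\<forall>t\<in>K. t \<le> z"
      using compact_attains_sup by metis
    hence z: "x \<le> z" "z \<le> hi" "f z = f m" by (auto simp: K_def)
    have "x < z"
    proof (rule ccontr)
      assume "\<not> x < z"
      hence "f x = f m" using z by simp
      moreover have "f y \<le> f m" using max_m y \<open>x < y\<close> by simp
      ultimately have "f y = f m" using \<open>\<not> f y < f x\<close> by linarith
      hence "y \<in> K" using y \<open>x < y\<close> by (simp add: K_def)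
      thus False using rightmost \<open>x < y\<close> \<open>\<not> x < z\<close> by force
    qed
    have "f \<psi> < f z" if "z < \<psi>" "\<psi> \<le> hi" for \<psi>
    proof -
      have "\<psi> \<notin> K" using rightmost that by force
      hence "f \<psi> \<noteq> f m" using z that by (simp add: K_def)
      moreover have "f \<psi> \<le> f m" using max_m z that by simp
      ultimately show ?thesis using z by linarith
    qed
    with rise have "\<forall>\<^sub>F t in at_left z. f z < f t" using x \<open>x < z\<close> z by force
    moreover have "\<forall>\<^sub>F t in at_left z. t \<in> {x<..<z}" using eventually_at_left_real \<open>x < z\<close> .
    ultimately obtain t where "f z < f t" "t \<in> {x<..<z}"
      using eventually_happens'[OF trivial_limit_at_left_real] eventually_conj by blast
    hence "f t \<le> f z" using max_m z by simp
    with \<open>f z < f t\<close> show False by simp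
  qed
qed

lemma rises_at_left_if_eventually_deriv_neg:
  fixes f :: "real \<Rightarrow> real"
  assumes "a < z" and cont: "continuous_on {a..z} f"
    and deriv: "\<forall>\<^sub>F t in at_left z. \<exists>d. (f has_real_derivative d) (at t) \<and> d < 0"
  shows "\<forall>\<^sub>F t in at_left z. f z < f t"
proof -
  obtain b where "b < z" and deriv_b: "\<forall>t>b. t < z \<longrightarrow> (\<exists>d. (f has_real_derivative d) (at t) \<and> d < 0)"
    using deriv unfolding eventually_at_left_field by blast
  have "f z < f t" if "max a b < t" "t < z" for t
  proof (rule DERIV_neg_imp_decreasing_open[OF \<open>t < z\<close>])
    fix u assume "t < u" "u < z"
    moreover have "b < u" using that \<open>t < u\<close> by linarith
    ultimately show "\<exists>d. (f has_real_derivative d) (at u) \<and> d < 0" using deriv_b by blast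
  next
    show "continuous_on {t..z} f" using cont that by (auto intro: continuous_on_subset)
  qed
  moreover have "max a b < z" using \<open>a < z\<close> \<open>b < z\<close> by simp
  ultimately show ?thesis unfolding eventually_at_left_field by blast
qed

lemma shift_below_left_of_strict_right_max:
  fixes f :: "real \<Rightarrow> real"
  assumes "1 < r" "0 < lo" and cont: "continuous_on {lo..hi} f"
    and beyond: "\<forall>\<phi>>hi. f \<phi> = w" and "w < f hi"
    and z: "lo < z" "z \<le> hi" and right: "\<And>\<psi>. z < \<psi> \<Longrightarrow> \<psi> \<le> hi \<Longrightarrow> f \<psi> < f z"
  shows "\<forall>\<^sub>F t in at_left z. f (r * t) < f t"
proof -
  have cont_z: "continuous_on {lo..z} f" using cont z by (auto intro: continuous_on_subset)
  have "z < r * z" using assms by simp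
  show ?thesis
  proof (cases "r * z \<le> hi")
    case True
    have "(\<lambda>t. r * t) ` {lo..z} \<subseteq> {lo..hi}"
      using assms True by (auto intro: order.trans[OF _ mult_left_mono])
    hence "continuous_on {lo..z} (\<lambda>t. f (r * t) - f t)"
      by (intro continuous_intros continuous_on_compose2[OF cont] cont_z) auto
    hence "((\<lambda>t. f (r * t) - f t) \<longlongrightarrow> f (r * z) - f z) (at_left z)"
      using continuous_on_Icc_at_leftD z(1) by blast
    moreover have "f (r * z) - f z < 0" using right \<open>z < r * z\<close> True by simp
    ultimately have "\<forall>\<^sub>F t in at_left z. f (r * t) - f t < 0" by (rule order_tendstoD(2))
    thus ?thesis by simp
  next
    case False
    have "((\<lambda>t. r * t) \<longlongrightarrow> r * z) (at_left z)" by (intro tendsto_intros)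
    hence "\<forall>\<^sub>F t in at_left z. hi < r * t" using False by (intro order_tendstoD(1)) auto
    moreover have "w < f z" using \<open>w < f hi\<close> right z by (cases "z = hi") force+
    hence "\<forall>\<^sub>F t in at_left z. w < f t"
      using continuous_on_Icc_at_leftD[OF cont_z z(1)] by (rule order_tendstoD(1)[rotated])
    ultimately show ?thesis by eventually_elim (use beyond in auto)
  qed
qed

lemma delay_ode_solution_strict_antimono:
  fixes f g :: "real \<Rightarrow> real"
  assumes "0 < lo" "0 < lam0" "lam0 < lam1"
    and cont: "continuous_on {lo..1} f" and beyond: "\<forall>\<phi>>1. f \<phi> = w" and "w < f 1"
    and g_nonpos: "\<forall>\<phi>\<in>{lo<..<1}. g \<phi> \<le> 0"
    and ode: "\<forall>\<phi>\<in>{lo<..<1} - {lam0 / lam1}. \<exists>d. (f has_real_derivative d) (at \<phi>) \<and>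
               (lam0 - lam1) * \<phi> * d + lam0 * (f (lam1 * \<phi> / lam0) - f \<phi>) + g \<phi> = 0"
  shows "strict_antimono_on {lo..1} f"
proof (rule strict_antimono_on_if_rises_left_of_strict_right_max[OF cont])
  fix z assume z: "lo < z" "z \<le> 1" and right: "\<And>\<psi>. z < \<psi> \<Longrightarrow> \<psi> \<le> 1 \<Longrightarrow> f \<psi> < f z"
  have "\<forall>\<^sub>F t in at_left z. f (lam1 / lam0 * t) < f t"
    by (rule shift_below_left_of_strict_right_max[OF _ \<open>0 < lo\<close> cont beyond \<open>w < f 1\<close> z right])
      (use \<open>0 < lam0\<close> \<open>lam0 < lam1\<close> in simp)
  moreover have "\<forall>\<^sub>F t in at_left z. t \<in> {lo<..<z}" using eventually_at_left_real z(1) .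
  moreover have "\<forall>\<^sub>F t in at_left z. t \<noteq> lam0 / lam1" by (rule eventually_neq_at_within)
  ultimately have "\<forall>\<^sub>F t in at_left z. \<exists>d. (f has_real_derivative d) (at t) \<and> d < 0"
  proof eventually_elim
    case (elim t)
    hence t: "t \<in> {lo<..<1} - {lam0 / lam1}" using z by auto
    then obtain d where d: "(f has_real_derivative d) (at t)"
      and eq: "(lam0 - lam1) * t * d + lam0 * (f (lam1 * t / lam0) - f t) + g t = 0"
      using ode by blast
    have "lam0 * (f (lam1 * t / lam0) - f t) < 0" using elim \<open>0 < lam0\<close> by (simp add: mult_pos_neg)
    moreover have "g t \<le> 0" using g_nonpos t by simp
    ultimately have "0 < (lam0 - lam1) * t * d" using eq by linarith
    moreover have "(lam0 - lam1) * t < 0" using t \<open>0 < lo\<close> \<open>lam0 < lam1\<close> by (simp add: mult_neg_pos)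
    ultimately have "d < 0" by (smt (verit) mult_nonpos_nonneg)
    with d show ?case by blast
  qed
  moreover have "continuous_on {lo..z} f" using cont z by (auto intro: continuous_on_subset)
  ultimately show "\<forall>\<^sub>F t in at_left z. f z < f t"
    using rises_at_left_if_eventually_deriv_neg[OF z(1)] by blast
qed

theorem lemma3p3:
  fixes M :: "'a measure" and X :: "real \<Rightarrow> 'a \<Rightarrow> nat"
    and lam0 lam1 a b \<alpha> \<beta> :: real and f0 f1 :: "real \<Rightarrow> real"
  assumes "0 < lam0" "lam0 < lam1" "0 < a" "0 < b" "lam1 - lam0 > 1 / a + 1 / b"
    and "poisson_process M X lam0"
    and "0 < \<alpha>" "\<alpha> < b / a" "b / a < \<beta>"
    and opt: "\<forall>\<psi>>0. \<forall>\<tau>. nat_stopping_time M X \<tau> \<longrightarrow>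
               Jbar M X lam0 lam1 a b \<psi> (exit_time X lam0 lam1 \<psi> \<alpha> \<beta>) \<le> Jbar M X lam0 lam1 a b \<psi> \<tau>"
    and f0_cont: "continuous_on {\<alpha> / \<beta>..1} f0"
    and f0_ode: "\<forall>\<phi>\<in>{\<alpha> / \<beta><..<1} - {lam0 / lam1}. \<exists>d. (f0 has_real_derivative d) (at \<phi>) \<and>
               (lam0 - lam1) * \<phi> * d + lam0 * (f0 (lam1 * \<phi> / lam0) - f0 \<phi>) = 0"
    and f0_bd: "f0 1 = 1" "\<forall>\<phi>>1. f0 \<phi> = 0"
    and f1_cont: "continuous_on {\<alpha> / \<beta>..1} f1"
    and f1_ode: "\<forall>\<phi>\<in>{\<alpha> / \<beta><..<1} - {lam0 / lam1}. \<exists>d. (f1 has_real_derivative d) (at \<phi>) \<and>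
               (lam0 - lam1) * \<phi> * d + lam0 * (f1 (lam1 * \<phi> / lam0) - f1 \<phi>) + (\<phi> - 1) = 0"
    and f1_bd: "f1 1 = 0" "\<forall>\<phi>>1. f1 \<phi> = - b"
  shows "(\<forall>x\<in>{\<alpha> / \<beta>..1}. \<forall>y\<in>{\<alpha> / \<beta>..1}. x < y \<longrightarrow> f0 y < f0 x) \<and>
         (\<forall>x\<in>{\<alpha> / \<beta>..1}. \<forall>y\<in>{\<alpha> / \<beta>..1}. x < y \<longrightarrow> f1 y < f1 x)"
proof -
  have "0 < \<alpha> / \<beta>" using assms(3,4,7-9) by (smt (verit) divide_pos_pos)
  have "strict_antimono_on {\<alpha> / \<beta>..1} f0"
    using f0_ode f0_bd assms(1,2)
    by (intro delay_ode_solution_strict_antimono[OF \<open>0 < \<alpha> / \<beta>\<close> _ _ f0_cont, where g = "\<lambda>_. 0"]) auto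
  moreover have "strict_antimono_on {\<alpha> / \<beta>..1} f1"
    using f1_ode f1_bd assms(1,2,4)
    by (intro delay_ode_solution_strict_antimono[OF \<open>0 < \<alpha> / \<beta>\<close> _ _ f1_cont, where g = "\<lambda>\<phi>. \<phi> - 1"]) auto
  ultimately show ?thesis by (simp add: monotone_on_def)
qed

end
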